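(* Let $w\in S_\infty$ and let $D\in\mathcal P(w)$. If $D'$ is obtained from $D$ by applying a chute move of type 1, 2 or 3, or the inverse of a chute move of type 1, 2 or 3, then $D'\in\mathcal P(w)$.
   Context: Permutations: $S_\infty=\bigcup_n S_n$ is generated by the simple transpositions $s_a=(a\ a{+}1)$, $a\ge 1$; $l(w)$ is the Coxeter length of $w$ (minimal number of simple transpositions whose product is $w$). A pipe dream is a finite subset $D\subset\mathbb{Z}_{>0}\times\mathbb{Z}_{>0}$; its elements $(r,c)$ are called crosses (in row $r$, column $c$), and $|D|$ is the number of crosses. The reading word of $D$ is obtained by listing the crosses row by row from top to bottom ($r=1,2,\dots$), within each row from right to left (decreasing $c$), and recording for each cross $(r,c)$ its antidiagonal index $r+c-1$; this gives a word $(a_1,\dots,a_k)$ with $k=|D|$. For $u\in S_\infty$ put $u\star s_a=us_a$ if $l(us_a)=l(u)+1$ and $u\star s_a=u$ otherwise. The Demazure product of $D$ is $\delta(D)=(\cdots((e\star s_{a_1})\star s_{a_2})\cdots)\star s_{a_k}$, where $e$ is the identity. For $w\in S_\infty$, $\mathcal P(w)=\{D \text{ pipe dream}:\delta(D)=w\}$. Chute moves: fix rows $m,m+1$ and columns $c<d$, and suppose $(m,j)\in D$ and $(m+1,j)\in D$ for every $c<j<d$. - Type 1 applies if $(m,c)\notin D$, $(m+1,c)\notin D$, $(m,d)\in D$, $(m+1,d)\notin D$; its result is $(D\setminus\{(m,d)\})\cup\{(m+1,c)\}$. - Type 2 applies if $(m,c)\notin D$, $(m+1,c)\in D$, $(m,d)\in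 D$, $(m+1,d)\notin D$; its result is $D\setminus\{(m,d)\}$. - Type 3 applies under the same conditions as type 2; its result is $D\setminus\{(m+1,c)\}$. The inverse of a chute move of a given type (with given $m,c,d$) is the operation sending the result back to the original configuration (e.g. the inverse of type 2 adds the cross $(m,d)$ to a pipe dream with $(m,c)\notin D$, $(m+1,c)\in D$, $(m,d)\notin D$, $(m+1,d)\notin D$ and all interior boxes of the rectangle filled). *)

theory Defs
  imports Main "HOL-Combinatorics.Transposition"
begin

text \<open>Permutations of the positive integers with finite support (S_infinity),
  represented as functions nat => nat fixing 0. Product uv is composition u o v.\<close>

definition S_inf :: "(nat \<Rightarrow> nat) set" where
  "S_inf = {w. bij w \<and> w 0 = 0 \<and> finite {i. w i \<noteq> i}}"

definition s :: "nat \<Rightarrow> nat \<Rightarrow> nat" where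
  "s a = transpose a (a + 1)"

definition word_prod :: "nat list \<Rightarrow> nat \<Rightarrow> nat" where
  "word_prod as = foldl (\<lambda>u a. u \<circ> s a) id as"

definition len :: "(nat \<Rightarrow> nat) \<Rightarrow> nat" where
  "len w = (LEAST k. \<exists>as. length as = k \<and> (\<forall>a\<in>set as. 1 \<le> a) \<and> word_prod as = w)"

definition dstar :: "(nat \<Rightarrow> nat) \<Rightarrow> nat \<Rightarrow> (nat \<Rightarrow> nat)" where
  "dstar u a = (if len (u \<circ> s a) = len u + 1 then u \<circ> s a else u)"

definition pipe_dream :: "(nat \<times> nat) set \<Rightarrow> bool" where
  "pipe_dream D \<longleftrightarrow> finite D \<and> (\<forall>(r,c)\<in>D. 1 \<le> r \<and> 1 \<le> c)"

definition reading_word :: "(nat \<times> nat) set \<Rightarrow> nat list" where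
  "reading_word D = concat (map (\<lambda>r. map (\<lambda>c. r + c - 1)
       (rev (sorted_list_of_set {c. (r, c) \<in> D}))) [1..<Suc (Max (insert 0 (fst ` D)))])"

definition demazure :: "(nat \<times> nat) set \<Rightarrow> (nat \<Rightarrow> nat)" where
  "demazure D = foldl dstar id (reading_word D)"

definition PD :: "(nat \<Rightarrow> nat) \<Rightarrow> (nat \<times> nat) set set" where
  "PD w = {D. pipe_dream D \<and> demazure D = w}"

definition chute_interior :: "(nat \<times> nat) set \<Rightarrow> nat \<Rightarrow> nat \<Rightarrow> nat \<Rightarrow> bool" where
  "chute_interior D m c d \<longleftrightarrow> 1 \<le> m \<and> 1 \<le> c \<and> c < d \<and>
     (\<forall>j. c < j \<and> j < d \<longrightarrow> (m, j) \<in> D \<and> (m + 1, j) \<in> D)"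

definition chute1 :: "(nat \<times> nat) set \<Rightarrow> (nat \<times> nat) set \<Rightarrow> bool" where
  "chute1 D D' \<longleftrightarrow> (\<exists>m c d. chute_interior D m c d \<and>
     (m, c) \<notin> D \<and> (m + 1, c) \<notin> D \<and> (m, d) \<in> D \<and> (m + 1, d) \<notin> D \<and>
     D' = (D - {(m, d)}) \<union> {(m + 1, c)})"

definition chute2 :: "(nat \<times> nat) set \<Rightarrow> (nat \<times> nat) set \<Rightarrow> bool" where
  "chute2 D D' \<longleftrightarrow> (\<exists>m c d. chute_interior D m c d \<and>
     (m, c) \<notin> D \<and> (m + 1, c) \<in> D \<and> (m, d) \<in> D \<and> (m + 1, d) \<notin> D \<and>
     D' = D - {(m, d)})"

definition chute3 :: "(nat \<times> nat) set \<Rightarrow> (nat \<times> nat) set \<Rightarrow> bool" where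
  "chute3 D D' \<longleftrightarrow> (\<exists>m c d. chute_interior D m c d \<and>
     (m, c) \<notin> D \<and> (m + 1, c) \<in> D \<and> (m, d) \<in> D \<and> (m + 1, d) \<notin> D \<and>
     D' = D - {(m + 1, c)})"

end

theory Submission
  imports Defs
begin

text \<open>For a permutation generated by simple transpositions the Coxeter length is the
  number of inversions, so \<open>u \<star> s\<^sub>a\<close> is \<open>u s\<^sub>a\<close> if \<open>u a < u (a + 1)\<close> and \<open>u\<close> otherwise.
  This right action on injections satisfies the relations of the 0-Hecke monoid
  (\<open>s\<^sub>a s\<^sub>a = s\<^sub>a\<close>, commutation of distant letters, braid relation), so words that are
  equivalent modulo these relations have the same Demazure product.
  A chute move only changes rows \<open>m, m + 1\<close> inside columns \<open>c..d\<close>. After commuting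
  distant letters out of the way, these two rows contribute a product of two
  staircase words \<open>s\<^bsub>m+c+k\<^esub> \<cdots> s\<^bsub>m+c\<^esub>\<close> to the reading word, and each chute type
  amounts to one 0-Hecke identity between such products.\<close>

lemma s_apply: "s a x = (if x = a then Suc a else if x = Suc a then a else x)"
  by (simp add: s_def transpose_def)

lemma s_s [simp]: "s a (s a x) = x"
  by (simp add: s_apply)

lemma comp_s_s [simp]: "u \<circ> s a \<circ> s a = u"
  by (simp add: fun_eq_iff)

lemma inj_s: "inj (s a)"
  by (metis injI s_s)

lemma word_prod_Nil [simp]: "word_prod [] = id"
  by (simp add: word_prod_def)

lemma word_prod_snoc [simp]: "word_prod (as @ [a]) = word_prod as \<circ> s a"
  by (simp add: word_prod_def)

definition finitary :: "(nat \<Rightarrow> nat) \<Rightarrow> bool" where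
  "finitary u \<longleftrightarrow> inj u \<and> u 0 = 0 \<and> (\<exists>N. \<forall>i\<ge>N. u i = i)"

definition generated :: "(nat \<Rightarrow> nat) \<Rightarrow> bool" where
  "generated u \<longleftrightarrow> (\<exists>as. (\<forall>a\<in>set as. 1 \<le> a) \<and> word_prod as = u)"

lemma finitary_comp_s:
  assumes "finitary u" "1 \<le> a"
  shows "finitary (u \<circ> s a)"
proof -
  from assms obtain N where N: "\<forall>i\<ge>N. u i = i" by (auto simp: finitary_def)
  then have "\<forall>i\<ge>N + a + 2. (u \<circ> s a) i = i" by (auto simp: s_apply)
  moreover have "inj (u \<circ> s a)" using assms inj_s by (auto simp: finitary_def intro: inj_compose)
  moreover have "(u \<circ> s a) 0 = 0" using assms by (auto simp: finitary_def s_apply)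
  ultimately show ?thesis unfolding finitary_def by blast
qed

lemma generated_id: "generated id"
  unfolding generated_def by (rule exI[of _ "[]"]) simp

lemma generated_comp_s:
  assumes "generated u" "1 \<le> a"
  shows "generated (u \<circ> s a)"
proof -
  from assms obtain as where "\<forall>b\<in>set as. 1 \<le> b" "word_prod as = u"
    by (auto simp: generated_def)
  with assms(2) show ?thesis
    unfolding generated_def by (intro exI[of _ "as @ [a]"]) simp
qed

lemma generated_imp_finitary: "generated u \<Longrightarrow> finitary u"
proof -
  have "\<forall>a\<in>set as. 1 \<le> a \<Longrightarrow> finitary (word_prod as)" for as
    by (induction as rule: rev_induct) (auto simp: finitary_comp_s, simp add: finitary_def)
  then show "generated u \<Longrightarrow> finitary u" by (auto simp: generated_def)
qed

definition inversions :: "(nat \<Rightarrow> nat) \<Rightarrow> (nat \<times> nat) set" where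
  "inversions u = {(i, j). 0 < i \<and> i < j \<and> u j < u i}"

lemma inversions_bounded:
  assumes "inj u" "\<forall>i\<ge>N. u i = i" "(i, j) \<in> inversions u"
  shows "j < N"
proof (rule ccontr)
  assume "\<not> j < N"
  with assms have ij: "i < j" "u j = j" "u j < u i" by (auto simp: inversions_def)
  show False
  proof (cases "N \<le> i")
    case True with assms ij show False by auto
  next
    case False
    with ij \<open>\<not> j < N\<close> have "N \<le> u i" by auto
    with assms have "u (u i) = u i" by auto
    with \<open>inj u\<close> have "u i = i" by (auto dest: injD)
    with False \<open>N \<le> u i\<close> show False by auto
  qed
qed

lemma finite_inversions: "finitary u \<Longrightarrow> finite (inversions u)"
proof -
  assume "finitary u"
  then obtain N where "inj u" "\<forall>i\<ge>N. u i = i" by (auto simp: finitary_def)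
  then have "inversions u \<subseteq> {..N} \<times> {..N}"
    using inversions_bounded by (force simp: inversions_def)
  then show ?thesis by (rule finite_subset) simp
qed

lemma inversions_comp_s_iff:
  assumes "1 \<le> a"
  shows "(i, j) \<in> inversions (u \<circ> s a) - {(a, Suc a)} \<longleftrightarrow>
    (s a i, s a j) \<in> inversions u - {(a, Suc a)}"
proof -
  have "0 < i \<and> i < j \<and> (i, j) \<noteq> (a, Suc a) \<longleftrightarrow>
      0 < s a i \<and> s a i < s a j \<and> (s a i, s a j) \<noteq> (a, Suc a)"
    using assms by (auto simp: s_apply)
  then show ?thesis by (auto simp: inversions_def)
qed

lemma card_inversions_comp_s:
  assumes "finitary u" "1 \<le> a"
  shows "card (inversions (u \<circ> s a)) =
    (if u a < u (Suc a) then card (inversions u) + 1 else card (inversions u) - 1)"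
proof -
  let ?p = "(a, Suc a)" and ?f = "map_prod (s a) (s a)"
  have "bij_betw ?f (inversions u - {?p}) (inversions (u \<circ> s a) - {?p})"
  proof (rule bij_betw_byWitness[where f' = ?f], goal_cases)
    case 3
    show ?case using inversions_comp_s_iff[OF assms(2)] by force
  next
    case 4
    show ?case using inversions_comp_s_iff[OF assms(2)] by force
  qed auto
  then have same: "card (inversions (u \<circ> s a) - {?p}) = card (inversions u - {?p})"
    by (simp add: bij_betw_same_card)
  have ne: "u a \<noteq> u (Suc a)" using assms(1) by (auto simp: finitary_def dest: injD)
  have fin: "finite (inversions u)" "finite (inversions (u \<circ> s a))"
    using assms finite_inversions finitary_comp_s by blast+
  have p: "?p \<in> inversions (u \<circ> s a) \<longleftrightarrow> u a < u (Suc a)"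
    "?p \<in> inversions u \<longleftrightarrow> u (Suc a) < u a"
    using assms(2) by (auto simp: inversions_def s_apply)
  show ?thesis
  proof (cases "u a < u (Suc a)")
    case True
    then have "card (inversions (u \<circ> s a)) = Suc (card (inversions u - {?p}))"
      using p(1) fin(2) same card_Suc_Diff1 by metis
    then show ?thesis using True p(2) by simp
  next
    case False
    with ne have "card (inversions u) = Suc (card (inversions (u \<circ> s a) - {?p}))"
      using p(2) fin(1) same card_Suc_Diff1 by (metis linorder_neqE_nat)
    then show ?thesis using False p(1) by simp
  qed
qed

lemma card_inversions_word_prod:
  "\<forall>a\<in>set as. 1 \<le> a \<Longrightarrow> card (inversions (word_prod as)) \<le> length as"
proof (induction as rule: rev_induct)
  case Nil
  have "inversions id = {}" by (auto simp: inversions_def)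
  then show ?case by (simp add: id_def)
next
  case (snoc a as)
  then have "finitary (word_prod as)"
    by (intro generated_imp_finitary) (auto simp: generated_def)
  with snoc have "card (inversions (word_prod as \<circ> s a)) \<le> Suc (length as)"
    using card_inversions_comp_s[of "word_prod as" a] by auto
  then show ?case by (simp only: word_prod_snoc length_append_singleton)
qed

lemma no_inversions_imp_id:
  assumes "finitary u" "inversions u = {}"
  shows "u = id"
proof -
  from assms obtain N where N: "\<forall>i\<ge>N. u i = i" and "inj u" "u 0 = 0"
    by (auto simp: finitary_def)
  have mono: "u i < u j" if "0 < i" "i < j" for i j
  proof -
    have "u i \<noteq> u j" using \<open>inj u\<close> that by (simp add: inj_eq)
    moreover have "\<not> u j < u i" using assms(2) that by (auto simp: inversions_def)
    ultimately show ?thesis by simp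
  qed
  have gap: "u i + (j - i) \<le> u j" if "0 < i" "i \<le> j" for i j
    using \<open>i \<le> j\<close>
  proof (induction j rule: dec_induct)
    case (step n)
    with mono[of n "Suc n"] \<open>0 < i\<close> show ?case by simp
  qed simp
  have "u i = i" for i
  proof (cases "i = 0")
    case False
    have "u 1 \<noteq> 0" using \<open>inj u\<close> \<open>u 0 = 0\<close> by (metis injD zero_neq_one)
    with gap[of 1 i] False have "i \<le> u i" by simp
    moreover have "u i + (max N i - i) \<le> max N i"
      using gap[of i "max N i"] N False by simp
    ultimately show ?thesis by simp
  qed (simp add: \<open>u 0 = 0\<close>)
  then show ?thesis by auto
qed

lemma inversion_imp_descent:
  assumes "(i, j) \<in> inversions u"
  shows "\<exists>a\<ge>1. u (Suc a) < u a"
proof (rule ccontr)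
  assume "\<not> ?thesis"
  then have "u (i + k) \<le> u (i + Suc k)" for k
    using assms by (auto simp: inversions_def not_less)
  then have "u (i + 0) \<le> u (i + (j - i))"
    by (rule lift_Suc_mono_le) simp
  with assms show False by (auto simp: inversions_def)
qed

lemma generated_word_of_card_inversions:
  "generated u \<Longrightarrow>
    \<exists>as. length as = card (inversions u) \<and> (\<forall>a\<in>set as. 1 \<le> a) \<and> word_prod as = u"
proof (induction "card (inversions u)" arbitrary: u)
  case 0
  then have "finitary u" by (simp add: generated_imp_finitary)
  with 0 have "u = id" using finite_inversions no_inversions_imp_id by simp
  with 0 show ?case by (intro exI[of _ "[]"]) simp
next
  case (Suc n)
  then have fin: "finitary u" by (simp add: generated_imp_finitary)
  from Suc(2) obtain p where "p \<in> inversions u" by (metis card.empty all_not_in_conv nat.simps(3))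
  then obtain a where a: "1 \<le> a" "u (Suc a) < u a"
    using inversion_imp_descent by (cases p) blast
  then have "card (inversions (u \<circ> s a)) = n"
    using card_inversions_comp_s[OF fin a(1)] Suc(2) by simp
  with Suc.hyps(1) generated_comp_s[OF Suc.prems a(1)] obtain bs where
    "length bs = n" "\<forall>b\<in>set bs. 1 \<le> b" "word_prod bs = u \<circ> s a"
    by metis
  with a Suc(2) show ?case
    by (intro exI[of _ "bs @ [a]"]) simp
qed

lemma len_eq_card_inversions:
  assumes "generated u"
  shows "len u = card (inversions u)"
  unfolding len_def
proof (rule Least_equality)
  show "\<exists>as. length as = card (inversions u) \<and> (\<forall>a\<in>set as. 1 \<le> a) \<and> word_prod as = u"
    using assms by (rule generated_word_of_card_inversions)
qed (use card_inversions_word_prod in blast)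

definition demazure_step :: "(nat \<Rightarrow> nat) \<Rightarrow> nat \<Rightarrow> (nat \<Rightarrow> nat)" where
  "demazure_step u a = (if u a < u (Suc a) then u \<circ> s a else u)"

lemma dstar_eq_demazure_step:
  assumes "generated u" "1 \<le> a"
  shows "dstar u a = demazure_step u a"
proof -
  have "len (u \<circ> s a) = card (inversions (u \<circ> s a))" "len u = card (inversions u)"
    using assms generated_comp_s len_eq_card_inversions by auto
  with card_inversions_comp_s[OF generated_imp_finitary[OF assms(1)] assms(2)] show ?thesis
    by (auto simp: dstar_def demazure_step_def)
qed

lemma foldl_dstar_eq_foldl_demazure_step:
  "generated u \<Longrightarrow> \<forall>a\<in>set as. 1 \<le> a \<Longrightarrow> foldl dstar u as = foldl demazure_step u as"
  by (induction as arbitrary: u)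
    (auto simp: dstar_eq_demazure_step demazure_step_def generated_comp_s)

lemma inj_demazure_step: "inj u \<Longrightarrow> inj (demazure_step u a)"
  by (simp add: demazure_step_def inj_compose inj_s)

lemma inj_foldl_demazure_step: "inj u \<Longrightarrow> inj (foldl demazure_step u as)"
  by (induction as arbitrary: u) (auto simp: inj_demazure_step)

lemma demazure_step_idem: "inj u \<Longrightarrow> demazure_step (demazure_step u a) a = demazure_step u a"
  by (auto simp: demazure_step_def s_apply)

lemma demazure_step_commute:
  assumes "Suc a < b \<or> Suc b < a"
  shows "demazure_step (demazure_step u a) b = demazure_step (demazure_step u b) a"
proof -
  have "s a \<circ> s b = s b \<circ> s a" using assms by (auto simp: s_apply fun_eq_iff)
  with assms show ?thesis
    by (auto simp: demazure_step_def s_apply comp_assoc)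
qed

lemma demazure_step_braid:
  assumes "inj u"
  shows "demazure_step (demazure_step (demazure_step u a) (Suc a)) a =
    demazure_step (demazure_step (demazure_step u (Suc a)) a) (Suc a)"
proof -
  have "u a \<noteq> u (Suc a)" "u a \<noteq> u (Suc (Suc a))" "u (Suc a) \<noteq> u (Suc (Suc a))"
    using assms by (simp_all add: inj_eq)
  then show ?thesis
    by (auto simp: demazure_step_def s_apply fun_eq_iff)
qed

text \<open>Quantifying over all injective starting points, not just \<open>id\<close>, makes this
  equivalence a congruence for concatenation.\<close>

definition hecke_equiv :: "nat list \<Rightarrow> nat list \<Rightarrow> bool" where
  "hecke_equiv xs ys \<longleftrightarrow> (\<forall>u. inj u \<longrightarrow> foldl demazure_step u xs = foldl demazure_step u ys)"

lemma hecke_equiv_refl [simp]: "hecke_equiv xs xs"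
  by (simp add: hecke_equiv_def)

lemma hecke_equiv_sym: "hecke_equiv xs ys \<Longrightarrow> hecke_equiv ys xs"
  by (simp add: hecke_equiv_def)

lemma hecke_equiv_trans [trans]: "hecke_equiv xs ys \<Longrightarrow> hecke_equiv ys zs \<Longrightarrow> hecke_equiv xs zs"
  by (simp add: hecke_equiv_def)

lemma hecke_equiv_append:
  "hecke_equiv xs ys \<Longrightarrow> hecke_equiv (p @ xs @ q) (p @ ys @ q)"
  by (simp add: hecke_equiv_def inj_foldl_demazure_step)

lemma hecke_equiv_append_left: "hecke_equiv xs ys \<Longrightarrow> hecke_equiv (p @ xs) (p @ ys)"
  using hecke_equiv_append[of xs ys p "[]"] by simp

lemma hecke_equiv_append_right: "hecke_equiv xs ys \<Longrightarrow> hecke_equiv (xs @ q) (ys @ q)"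
  using hecke_equiv_append[of xs ys "[]" q] by simp

lemma hecke_equiv_idem: "hecke_equiv [a, a] [a]"
  by (simp add: hecke_equiv_def demazure_step_idem)

lemma hecke_equiv_braid: "hecke_equiv [a, Suc a, a] [Suc a, a, Suc a]"
  by (simp add: hecke_equiv_def demazure_step_braid)

definition distant :: "nat list \<Rightarrow> nat list \<Rightarrow> bool" where
  "distant xs ys \<longleftrightarrow> (\<forall>x\<in>set xs. \<forall>y\<in>set ys. Suc x < y \<or> Suc y < x)"

lemma hecke_equiv_commute_pair:
  assumes "Suc a < b \<or> Suc b < a"
  shows "hecke_equiv [a, b] [b, a]"
  unfolding hecke_equiv_def using demazure_step_commute[OF assms] by simp

lemma hecke_equiv_commute_letter: "distant [x] ys \<Longrightarrow> hecke_equiv (x # ys) (ys @ [x])"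
proof (induction ys)
  case (Cons y ys)
  then have "hecke_equiv (x # y # ys) (y # x # ys)"
    using hecke_equiv_append_right[OF hecke_equiv_commute_pair[of x y], of ys]
    by (simp add: distant_def)
  also have "hecke_equiv (y # x # ys) (y # ys @ [x])"
    using Cons hecke_equiv_append_left[of "x # ys" "ys @ [x]" "[y]"] by (simp add: distant_def)
  finally show ?case by simp
qed simp

lemma hecke_equiv_commute: "distant xs ys \<Longrightarrow> hecke_equiv (xs @ ys) (ys @ xs)"
proof (induction xs)
  case (Cons x xs)
  then have "hecke_equiv (x # xs @ ys) (x # ys @ xs)"
    using hecke_equiv_append_left[of "xs @ ys" "ys @ xs" "[x]"] by (simp add: distant_def)
  also have "hecke_equiv (x # ys @ xs) (ys @ x # xs)"
    using Cons hecke_equiv_append_right[OF hecke_equiv_commute_letter[of x ys], of xs]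
    by (simp add: distant_def)
  finally show ?case by simp
qed simp

definition staircase :: "nat \<Rightarrow> nat \<Rightarrow> nat list" where
  "staircase a k = rev [a..<a + k]"

lemma staircase_Suc: "staircase a (Suc k) = staircase (Suc a) k @ [a]"
  by (simp add: staircase_def upt_rec)

lemma set_staircase: "set (staircase a k) = {a..<a + k}"
  by (simp add: staircase_def)

lemma hecke_equiv_staircase_shift:
  "hecke_equiv (staircase a (Suc k) @ staircase (Suc a) k) (staircase a k @ staircase a (Suc k))"
proof (induction k arbitrary: a)
  case (Suc k)
  define B where "B = staircase (Suc (Suc a)) k"
  define C where "C = staircase (Suc a) k"
  have A: "staircase (Suc a) (Suc k) = B @ [Suc a]" by (simp add: B_def staircase_Suc)
  have "distant [a] B" "distant B [a]" by (auto simp: distant_def B_def set_staircase)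
  then have "hecke_equiv (staircase (Suc a) (Suc k) @ [a] @ B @ [Suc a])
      (staircase (Suc a) (Suc k) @ B @ [a] @ [Suc a])"
    using hecke_equiv_append[OF hecke_equiv_commute[of "[a]" B], of _ "[Suc a]"] by simp
  also have "hecke_equiv \<dots> (C @ staircase (Suc a) (Suc k) @ [a, Suc a])"
    using hecke_equiv_append_right[OF Suc[of "Suc a"], of "[a, Suc a]"] by (simp add: B_def C_def)
  also have "hecke_equiv \<dots> (C @ B @ [a, Suc a, a])"
    using hecke_equiv_append_left[OF hecke_equiv_sym[OF hecke_equiv_braid[of a]], of "C @ B"]
    by (simp add: A)
  also have "hecke_equiv \<dots> (C @ [a] @ B @ [Suc a, a])"
    using hecke_equiv_append[OF hecke_equiv_commute[of B "[a]"], of C "[Suc a, a]"]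
      \<open>distant B [a]\<close> by simp
  finally show ?case
    by (simp add: A C_def staircase_Suc[of a "Suc k"] staircase_Suc[of a k])
qed (simp add: staircase_def)

lemma hecke_equiv_staircase_square:
  "hecke_equiv (staircase a (Suc k) @ staircase a (Suc k)) (staircase a k @ staircase a (Suc k))"
proof -
  have "hecke_equiv ((staircase a (Suc k) @ staircase (Suc a) k) @ [a])
      ((staircase a k @ staircase a (Suc k)) @ [a])"
    by (rule hecke_equiv_append_right[OF hecke_equiv_staircase_shift])
  also have "hecke_equiv \<dots> ((staircase a k @ staircase (Suc a) k) @ [a])"
    using hecke_equiv_append_left[OF hecke_equiv_idem, of "staircase a k @ staircase (Suc a) k" a]
    by (simp add: staircase_Suc)
  finally show ?thesis by (simp add: staircase_Suc[of a k])
qed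

lemma hecke_equiv_staircase_square':
  "hecke_equiv (staircase a (Suc k) @ staircase a (Suc k)) (staircase a (Suc k) @ staircase (Suc a) k)"
  using hecke_equiv_staircase_square hecke_equiv_staircase_shift hecke_equiv_sym hecke_equiv_trans
  by blast

lemma sorted_list_of_set_Un_less:
  assumes "finite A" "finite B" "\<forall>x\<in>A. \<forall>y\<in>B. x < y"
  shows "sorted_list_of_set (A \<union> B) = sorted_list_of_set A @ sorted_list_of_set B"
  by (rule sorted_distinct_set_unique) (use assms in \<open>auto simp: sorted_append less_imp_le\<close>)

definition row_word :: "(nat \<times> nat) set \<Rightarrow> nat \<Rightarrow> (nat \<Rightarrow> bool) \<Rightarrow> nat list" where
  "row_word D r P = map (\<lambda>j. r + j - 1) (rev (sorted_list_of_set {j. (r, j) \<in> D \<and> P j}))"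

abbreviation row :: "(nat \<times> nat) set \<Rightarrow> nat \<Rightarrow> nat list" where
  "row D r \<equiv> row_word D r (\<lambda>_. True)"

lemma finite_row: "finite D \<Longrightarrow> finite {j. (r, j) \<in> D \<and> P j}"
  by (rule finite_subset[of _ "snd ` D"]) force+

lemma set_row_word: "finite D \<Longrightarrow> set (row_word D r P) = (\<lambda>j. r + j - 1) ` {j. (r, j) \<in> D \<and> P j}"
  by (simp add: row_word_def finite_row)

lemma row_word_cong:
  assumes "\<And>j. P j \<Longrightarrow> (r, j) \<in> D \<longleftrightarrow> (r, j) \<in> D'"
  shows "row_word D r P = row_word D' r P"
proof -
  have "{j. (r, j) \<in> D \<and> P j} = {j. (r, j) \<in> D' \<and> P j}" using assms by blast
  then show ?thesis by (simp add: row_word_def)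
qed

lemma row_split:
  assumes "finite D" "c \<le> d"
  shows "row D r = row_word D r (\<lambda>j. d < j) @ row_word D r (\<lambda>j. c \<le> j \<and> j \<le> d)
    @ row_word D r (\<lambda>j. j < c)"
proof -
  let ?S = "\<lambda>P. {j. (r, j) \<in> D \<and> P j}"
  let ?L = "?S (\<lambda>j. j < c)" and ?M = "?S (\<lambda>j. c \<le> j \<and> j \<le> d)" and ?H = "?S (\<lambda>j. d < j)"
  have "{j. (r, j) \<in> D} = ?L \<union> (?M \<union> ?H)"
    by auto
  then have "sorted_list_of_set {j. (r, j) \<in> D} = sorted_list_of_set (?L \<union> (?M \<union> ?H))"
    by (rule arg_cong)
  also have "\<dots> = sorted_list_of_set ?L @ sorted_list_of_set (?M \<union> ?H)"
    using finite_row[OF assms(1)] assms(2) by (intro sorted_list_of_set_Un_less) auto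
  also have "sorted_list_of_set (?M \<union> ?H) = sorted_list_of_set ?M @ sorted_list_of_set ?H"
    using finite_row[OF assms(1)] by (intro sorted_list_of_set_Un_less) auto
  finally show ?thesis by (simp add: row_word_def)
qed

lemma row_word_interval:
  assumes "1 \<le> r" "{j. (r, j) \<in> D \<and> P j} = {lo..<hi}"
  shows "row_word D r P = staircase (r + lo - 1) (hi - lo)"
proof -
  obtain q where q: "r = Suc q" using assms(1) by (cases r) auto
  have "row_word D r P = map (\<lambda>j. j + q) (rev [lo..<hi])"
    using assms(2) by (simp add: row_word_def q add.commute)
  also have "\<dots> = rev [lo + q..<hi + q]"
    by (induction hi) auto
  also have "\<dots> = staircase (r + lo - 1) (hi - lo)"
    by (cases "lo \<le> hi") (simp_all add: staircase_def q add.commute)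
  finally show ?thesis .
qed

lemma hecke_equiv_move_distant:
  assumes "distant L H" "distant M H" "distant L N"
  shows "hecke_equiv (M @ L @ H @ N) (H @ M @ N @ L)"
proof -
  have "hecke_equiv (M @ L @ H @ N) (M @ H @ L @ N)"
    using hecke_equiv_append[OF hecke_equiv_commute[OF assms(1)], of M N] by simp
  also have "hecke_equiv \<dots> (H @ M @ L @ N)"
    using hecke_equiv_append_right[OF hecke_equiv_commute[OF assms(2)], of "L @ N"] by simp
  also have "hecke_equiv \<dots> (H @ M @ N @ L)"
    using hecke_equiv_append_left[OF hecke_equiv_commute[OF assms(3)], of "H @ M"] by simp
  finally show ?thesis .
qed

lemma hecke_equiv_two_rows_window:
  fixes D D' :: "(nat \<times> nat) set" and c d :: nat
  defines "W E r \<equiv> row_word E r (\<lambda>j. c \<le> j \<and> j \<le> d)"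
  assumes "finite D" "finite D'" "1 \<le> m" "c < d"
    and outside: "\<And>r j. r = m \<or> r = Suc m \<Longrightarrow> j < c \<or> d < j \<Longrightarrow> (r, j) \<in> D \<longleftrightarrow> (r, j) \<in> D'"
    and corners: "(m, c) \<notin> D" "(m, c) \<notin> D'" "(Suc m, d) \<notin> D" "(Suc m, d) \<notin> D'"
    and window: "hecke_equiv (W D m @ W D (Suc m)) (W D' m @ W D' (Suc m))"
  shows "hecke_equiv (row D m @ row D (Suc m)) (row D' m @ row D' (Suc m))"
proof -
  let ?L = "row_word D m (\<lambda>j. j < c)" and ?H = "row_word D (Suc m) (\<lambda>j. d < j)"
  have window_letters: "m + c \<le> x \<and> x < m + d"
    if "E = D \<or> E = D'" "x \<in> set (W E m @ W E (Suc m))" for E x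
  proof -
    have "finite E" "(m, c) \<notin> E" "(Suc m, d) \<notin> E" using that(1) assms corners by auto
    with that(2) \<open>1 \<le> m\<close> show ?thesis
      by (auto simp: W_def set_row_word le_less)
  qed
  have L: "x + 2 \<le> m + c" if "x \<in> set ?L" for x using that assms by (auto simp: set_row_word)
  have H: "m + d < x" if "x \<in> set ?H" for x using that assms by (auto simp: set_row_word)
  have "distant ?L ?H"
    using L H \<open>c < d\<close> unfolding distant_def by fastforce
  moreover have "distant (W E m) ?H" "distant ?L (W E (Suc m))" if "E = D \<or> E = D'" for E
    using window_letters[OF that] L H unfolding distant_def by fastforce+
  ultimately have distant: "distant ?L ?H" "distant (W E m) ?H" "distant ?L (W E (Suc m))"
    if "E = D \<or> E = D'" for E
    using that by blast+
  have "hecke_equiv (W D m @ ?L @ ?H @ W D (Suc m)) (?H @ W D m @ W D (Suc m) @ ?L)"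
    using hecke_equiv_move_distant distant[of D] by simp
  also have "hecke_equiv \<dots> (?H @ W D' m @ W D' (Suc m) @ ?L)"
    using hecke_equiv_append[OF window, of ?H ?L] by simp
  also have "hecke_equiv \<dots> (W D' m @ ?L @ ?H @ W D' (Suc m))"
    using hecke_equiv_sym[OF hecke_equiv_move_distant] distant[of D'] by simp
  finally have middle:
    "hecke_equiv (W D m @ ?L @ ?H @ W D (Suc m)) (W D' m @ ?L @ ?H @ W D' (Suc m))" .
  have same: "row_word D r P = row_word D' r P"
    if "r = m \<or> r = Suc m" "\<And>j. P j \<Longrightarrow> j < c \<or> d < j" for r P
    using that outside by (intro row_word_cong) blast
  have "row E m @ row E (Suc m) = row_word E m (\<lambda>j. d < j) @ (W E m @ row_word E m (\<lambda>j. j < c)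
      @ row_word E (Suc m) (\<lambda>j. d < j) @ W E (Suc m)) @ row_word E (Suc m) (\<lambda>j. j < c)"
    if "finite E" for E
    using row_split[OF that, of c d] \<open>c < d\<close> by (simp add: W_def)
  with hecke_equiv_append[OF middle, of "row_word D m (\<lambda>j. d < j)" "row_word D (Suc m) (\<lambda>j. j < c)"]
  show ?thesis
    using assms(2,3) same[of m "\<lambda>j. d < j"] same[of m "\<lambda>j. j < c"]
      same[of "Suc m" "\<lambda>j. d < j"] same[of "Suc m" "\<lambda>j. j < c"]
    by simp
qed

lemma reading_word_eq_rows:
  assumes "finite D" "Max (insert 0 (fst ` D)) \<le> K"
  shows "reading_word D = concat (map (row D) [1..<Suc K])"
proof -
  let ?M = "Max (insert 0 (fst ` D))"
  have "row D r = []" if "?M < r" for r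
  proof -
    have "(r, j) \<notin> D" for j
      using that assms(1) Max_ge[of "insert 0 (fst ` D)" r] by force
    then show ?thesis by (simp add: row_word_def)
  qed
  then have "concat (map (row D) [Suc ?M..<Suc K]) = []"
    by (auto simp: concat_eq_Nil_conv)
  moreover have "[1..<Suc K] = [1..<Suc ?M] @ [Suc ?M..<Suc K]"
    using assms(2) upt_add_eq_append[of 1 "Suc ?M" "K - ?M"] by simp
  ultimately show ?thesis
    by (simp add: reading_word_def row_word_def)
qed

lemma hecke_equiv_reading_word_two_rows:
  assumes "finite D" "finite D'" "1 \<le> m"
    and outside: "\<And>r j. r \<noteq> m \<Longrightarrow> r \<noteq> Suc m \<Longrightarrow> (r, j) \<in> D \<longleftrightarrow> (r, j) \<in> D'"
    and rows: "hecke_equiv (row D m @ row D (Suc m)) (row D' m @ row D' (Suc m))"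
  shows "hecke_equiv (reading_word D) (reading_word D')"
proof -
  obtain K where K: "Suc m \<le> K" "Max (insert 0 (fst ` D)) \<le> K" "Max (insert 0 (fst ` D')) \<le> K"
    by (metis max.cobounded1 max.cobounded2 max.coboundedI2)
  have upt: "[1..<Suc K] = [1..<m] @ [m, Suc m] @ [Suc (Suc m)..<Suc K]"
    using \<open>1 \<le> m\<close> K(1) upt_add_eq_append[of 1 m "Suc K - m"] by (simp add: upt_conv_Cons)
  have split: "reading_word E = concat (map (row E) [1..<m]) @ (row E m @ row E (Suc m))
      @ concat (map (row E) [Suc (Suc m)..<Suc K])"
    if "E = D \<or> E = D'" for E
  proof -
    have "reading_word E = concat (map (row E) [1..<Suc K])"
      using that assms(1,2) K(2,3) reading_word_eq_rows by blast
    then show ?thesis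
      by (simp only: upt map_append concat_append list.map concat.simps append.assoc append_Nil2)
  qed
  have "row D r = row D' r" if "r \<noteq> m" "r \<noteq> Suc m" for r
    using outside[OF that] by (intro row_word_cong) blast
  then have "map (row D) [1..<m] = map (row D') [1..<m]"
    "map (row D) [Suc (Suc m)..<Suc K] = map (row D') [Suc (Suc m)..<Suc K]"
    by (auto intro: map_cong)
  with hecke_equiv_append[OF rows] split show ?thesis
    by metis
qed

lemma window_word:
  assumes "1 \<le> r" "c < d" "\<forall>j. c < j \<and> j < d \<longrightarrow> (r, j) \<in> E"
  defines "lo \<equiv> if (r, c) \<in> E then c else Suc c"
    and "hi \<equiv> if (r, d) \<in> E then Suc d else d"
  shows "row_word E r (\<lambda>j. c \<le> j \<and> j \<le> d) = staircase (r + lo - 1) (hi - lo)"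
proof (rule row_word_interval[OF assms(1)])
  show "{j. (r, j) \<in> E \<and> c \<le> j \<and> j \<le> d} = {lo..<hi}"
    using assms(2,3) unfolding lo_def hi_def by (auto simp: le_less less_Suc_eq)
qed

text \<open>Inside the rectangle only \<open>(m, d)\<close> and \<open>(m + 1, c)\<close> may differ between \<open>D\<close> and \<open>D'\<close>:
  the first decides the length of the staircase read off row \<open>m\<close>, the second where the
  staircase of row \<open>m + 1\<close> starts.\<close>

lemma hecke_equiv_reading_word_rectangle:
  assumes "finite D" "finite D'" and rect: "chute_interior D m c d"
    and corners: "(m, c) \<notin> D" "(m, c) \<notin> D'" "(Suc m, d) \<notin> D" "(Suc m, d) \<notin> D'"
    and agree: "\<And>p. p \<noteq> (m, d) \<Longrightarrow> p \<noteq> (Suc m, c) \<Longrightarrow> p \<in> D \<longleftrightarrow> p \<in> D'"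
    and staircases: "hecke_equiv
      (staircase (m + c) (if (m, d) \<in> D then d - c else d - c - 1) @
       (if (Suc m, c) \<in> D then staircase (m + c) (d - c) else staircase (Suc (m + c)) (d - c - 1)))
      (staircase (m + c) (if (m, d) \<in> D' then d - c else d - c - 1) @
       (if (Suc m, c) \<in> D' then staircase (m + c) (d - c) else staircase (Suc (m + c)) (d - c - 1)))"
  shows "hecke_equiv (reading_word D) (reading_word D')"
proof -
  have m: "1 \<le> m" and "c < d"
    and interior: "\<And>j. c < j \<Longrightarrow> j < d \<Longrightarrow> (m, j) \<in> D \<and> (Suc m, j) \<in> D"
    using rect by (auto simp: chute_interior_def)
  have window: "row_word E r (\<lambda>j. c \<le> j \<and> j \<le> d) =
      staircase (r + (if (r, c) \<in> E then c else Suc c) - 1)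
        ((if (r, d) \<in> E then Suc d else d) - (if (r, c) \<in> E then c else Suc c))"
    if "E = D \<or> E = D'" "r = m \<or> r = Suc m" for E r
    using that interior agree m \<open>c < d\<close> by (intro window_word) auto
  have Wm: "row_word E m (\<lambda>j. c \<le> j \<and> j \<le> d) =
      staircase (m + c) (if (m, d) \<in> E then d - c else d - c - 1)"
    if "E = D \<or> E = D'" for E
    using window[OF that] that corners \<open>c < d\<close> by auto
  have WSm: "row_word E (Suc m) (\<lambda>j. c \<le> j \<and> j \<le> d) =
      (if (Suc m, c) \<in> E then staircase (m + c) (d - c) else staircase (Suc (m + c)) (d - c - 1))"
    if "E = D \<or> E = D'" for E
    using window[OF that] that corners \<open>c < d\<close> by auto
  have "hecke_equiv (row D m @ row D (Suc m)) (row D' m @ row D' (Suc m))"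
  proof (rule hecke_equiv_two_rows_window[OF assms(1,2) m \<open>c < d\<close> _ corners])
    show "(r, j) \<in> D \<longleftrightarrow> (r, j) \<in> D'" if "r = m \<or> r = Suc m" "j < c \<or> d < j" for r j
      using that agree \<open>c < d\<close> by auto
    show "hecke_equiv
        (row_word D m (\<lambda>j. c \<le> j \<and> j \<le> d) @ row_word D (Suc m) (\<lambda>j. c \<le> j \<and> j \<le> d))
        (row_word D' m (\<lambda>j. c \<le> j \<and> j \<le> d) @ row_word D' (Suc m) (\<lambda>j. c \<le> j \<and> j \<le> d))"
      using staircases by (simp only: Wm WSm simp_thms)
  qed
  then show ?thesis
    using agree by (intro hecke_equiv_reading_word_two_rows[OF assms(1,2) m]) auto
qed

abbreviation chute :: "(nat \<times> nat) set \<Rightarrow> (nat \<times> nat) set \<Rightarrow> bool" where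
  "chute D D' \<equiv> chute1 D D' \<or> chute2 D D' \<or> chute3 D D'"

lemma chute_cases:
  assumes "chute D D'"
  obtains m c d where "chute_interior D m c d" "(m, c) \<notin> D" "(m, d) \<in> D" "(m + 1, d) \<notin> D"
    and "(m + 1, c) \<notin> D" "D' = D - {(m, d)} \<union> {(m + 1, c)}"
  | m c d where "chute_interior D m c d" "(m, c) \<notin> D" "(m, d) \<in> D" "(m + 1, d) \<notin> D"
    and "(m + 1, c) \<in> D" "D' = D - {(m, d)}"
  | m c d where "chute_interior D m c d" "(m, c) \<notin> D" "(m, d) \<in> D" "(m + 1, d) \<notin> D"
    and "(m + 1, c) \<in> D" "D' = D - {(m + 1, c)}"
  using assms unfolding chute1_def chute2_def chute3_def by blast

lemma hecke_equiv_reading_word_chute: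
  assumes "finite D" "chute D D'"
  shows "hecke_equiv (reading_word D) (reading_word D')"
  using assms(2)
proof (cases rule: chute_cases)
  case (1 m c d)
  then have "d - c = Suc (d - c - 1)" unfolding chute_interior_def by (elim conjE) linarith
  with 1 assms(1) show ?thesis
    using hecke_equiv_staircase_shift[of "m + c" "d - c - 1"]
    by (intro hecke_equiv_reading_word_rectangle) (auto simp: chute_interior_def)
next
  case (2 m c d)
  then have "d - c = Suc (d - c - 1)" unfolding chute_interior_def by (elim conjE) linarith
  with 2 assms(1) show ?thesis
    using hecke_equiv_staircase_square[of "m + c" "d - c - 1"]
    by (intro hecke_equiv_reading_word_rectangle) (auto simp: chute_interior_def)
next
  case (3 m c d)
  then have "d - c = Suc (d - c - 1)" unfolding chute_interior_def by (elim conjE) linarith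
  with 3 assms(1) show ?thesis
    using hecke_equiv_staircase_square'[of "m + c" "d - c - 1"]
    by (intro hecke_equiv_reading_word_rectangle) (auto simp: chute_interior_def)
qed

lemma pipe_dream_subset_insert:
  "pipe_dream D \<Longrightarrow> D' \<subseteq> insert (r, c) D \<Longrightarrow> 1 \<le> r \<Longrightarrow> 1 \<le> c \<Longrightarrow> pipe_dream D'"
  unfolding pipe_dream_def by (auto intro: finite_subset)

lemma pipe_dream_chute_iff:
  assumes "chute D D'"
  shows "pipe_dream D \<longleftrightarrow> pipe_dream D'"
  using assms
proof (cases rule: chute_cases)
  case (1 m c d)
  then show ?thesis
    using pipe_dream_subset_insert[of D D' "m + 1" c] pipe_dream_subset_insert[of D' D m d]
    by (auto simp: chute_interior_def)
next
  case (2 m c d)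
  then show ?thesis
    using pipe_dream_subset_insert[of D D' m d] pipe_dream_subset_insert[of D' D m d]
    by (auto simp: chute_interior_def)
next
  case (3 m c d)
  then show ?thesis
    using pipe_dream_subset_insert[of D D' "m + 1" c] pipe_dream_subset_insert[of D' D "m + 1" c]
    by (auto simp: chute_interior_def)
qed

lemma reading_word_letters_pos:
  assumes "pipe_dream D" "a \<in> set (reading_word D)"
  shows "1 \<le> a"
proof -
  from assms(2) obtain r where "1 \<le> r" "a \<in> set (row D r)"
    by (auto simp: reading_word_def row_word_def)
  with assms(1) obtain c where "(r, c) \<in> D" "a = r + c - 1"
    by (auto simp: set_row_word pipe_dream_def)
  with assms(1) \<open>1 \<le> r\<close> show ?thesis by (auto simp: pipe_dream_def)
qed

lemma demazure_eq_foldl_demazure_step: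
  "pipe_dream D \<Longrightarrow> demazure D = foldl demazure_step id (reading_word D)"
  unfolding demazure_def
  using foldl_dstar_eq_foldl_demazure_step[OF generated_id] reading_word_letters_pos by blast

lemma demazure_chute:
  assumes "pipe_dream D" "chute D D'"
  shows "demazure D' = demazure D"
proof -
  have "pipe_dream D'" using assms pipe_dream_chute_iff by blast
  moreover have "hecke_equiv (reading_word D) (reading_word D')"
    using assms hecke_equiv_reading_word_chute by (auto simp: pipe_dream_def)
  ultimately show ?thesis
    using assms(1) by (simp add: demazure_eq_foldl_demazure_step hecke_equiv_def)
qed

theorem theorem2p2:
  fixes w :: "nat \<Rightarrow> nat" and D D' :: "(nat \<times> nat) set"
  assumes "w \<in> S_inf"
    and "D \<in> PD w"
    and "chute1 D D' \<or> chute2 D D' \<or> chute3 D D' \<or>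
         chute1 D' D \<or> chute2 D' D \<or> chute3 D' D"
  shows "D' \<in> PD w"
proof -
  from assms(2) have D: "pipe_dream D" "demazure D = w" by (auto simp: PD_def)
  from assms(3) consider "chute D D'" | "chute D' D" by blast
  then have "pipe_dream D' \<and> demazure D' = demazure D"
  proof cases
    case 1
    with D show ?thesis using pipe_dream_chute_iff demazure_chute by blast
  next
    case 2
    with D show ?thesis using pipe_dream_chute_iff demazure_chute by metis
  qed
  with D show ?thesis by (simp add: PD_def)
qed

end
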